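(* Let $n\ge 3$ and let $P_n(x)=x^n+a_{n-2}x^{n-2}+\cdots+a_1x+a_0$ be a real monic polynomial whose coefficient of $x^{n-1}$ is zero. For $2\le i\le n$ let $P_i=\frac{i!}{n!}P_n^{(n-i)}$, so that $P_{i-1}=\frac1iP_i'$ for $3\le i\le n$, each $P_i$ is monic of degree $i$ with zero coefficient of $x^{i-1}$, and the constant term of $P_i$ is $b_i=\frac{i!\,(n-i)!}{n!}\,a_{n-i}$. For $3\le i\le n$ define $R_{i-2}$ by $P_i(x)=xP_{i-1}(x)-R_{i-2}(x)$ and put $R^0_{i-2}=R_{i-2}+b_i$ (a polynomial not depending on $b_i$). Then $P_n$ has $n$ distinct real roots if and only if $a_{n-2}<0$ and, for every $i\in\{3,\dots,n\}$ (where, inductively, $P_{i-1}$ has $i-1$ distinct real roots $\alpha^{(i-1)}_1<\cdots<\alpha^{(i-1)}_{i-1}$): - if $i$ is even, $$\max_{k\in\{1,\dots,\frac{i-2}{2}\}}R^0_{i-2}\big(\alpha^{(i-1)}_{2k}\big)<b_i<\min_{k\in\{0,\dots,\frac{i-2}{2}\}}R^0_{i-2}\big(\alpha^{(i-1)}_{2k+1}\big);$$ - if $i$ is odd, $$\max_{k\in\{0,\dots,\frac{i-3}{2}\}}R^0_{i-2}\big(\alpha^{(i-1)}_{2k+1}\big)<b_i<\min_{k\in\{1,\dots,\frac{i-1}{2}\}}R^0_{i-2}\big(\alpha^{(i-1)}_{2k}\big).$$ (In particular each of these open intervals is nonempty.)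
   Context: $P_n^{(m)}$ denotes the $m$-th derivative. The condition $a_{n-2}<0$ is equivalent to $P_2(x)=x^2+\frac{2(n-2)!}{n!}a_{n-2}$ having two distinct real roots. $R_{i-2}(x)=xP_{i-1}(x)-P_i(x)$ has constant term $-b_i$, and $R^0_{i-2}$ is $R_{i-2}$ with its constant term removed. *)

theory Defs
  imports "HOL-Computational_Algebra.Polynomial"
begin

definition Pder :: "nat \<Rightarrow> real poly \<Rightarrow> nat \<Rightarrow> real poly" where
  "Pder n P i = smult (fact i / fact n) ((pderiv ^^ (n - i)) P)"

definition bcoef :: "nat \<Rightarrow> real poly \<Rightarrow> nat \<Rightarrow> real" where
  "bcoef n P i = fact i * fact (n - i) / fact n * coeff P (n - i)"

text \<open>Rpoly n P i is R_{i-2}, defined by P_i = x P_{i-1} - R_{i-2}\<close>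
definition Rpoly :: "nat \<Rightarrow> real poly \<Rightarrow> nat \<Rightarrow> real poly" where
  "Rpoly n P i = [:0, 1:] * Pder n P (i - 1) - Pder n P i"

text \<open>R0poly n P i is R^0_{i-2} = R_{i-2} + b_i\<close>
definition R0poly :: "nat \<Rightarrow> real poly \<Rightarrow> nat \<Rightarrow> real poly" where
  "R0poly n P i = Rpoly n P i + [:bcoef n P i:]"

text \<open>the j-th smallest real root (1-indexed)\<close>
definition alpha :: "real poly \<Rightarrow> nat \<Rightarrow> real" where
  "alpha p j = sorted_list_of_set {x. poly p x = 0} ! (j - 1)"

end

theory Submission
  imports Defs
begin

text \<open>
  Let p be monic of degree m whose derivative has m - 1 distinct real roots
  beta_1 < ... < beta_(m-1). Then p has m distinct real roots iff (-1)^(m-j) p(beta_j) > 0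
  for every j: if it has, Rolle's theorem interlaces the beta_j with the roots, so exactly m - j
  roots lie above beta_j; conversely, the intermediate value theorem gives a root between any
  two consecutive points of -infinity < beta_1 < ... < beta_(m-1) < infinity.
  The derivative of P_i is i P_(i-1), and at a root a of P_(i-1) we have P_i(a) = b_i - R0_(i-2)(a),
  so for P_i these sign conditions are exactly the stated bounds on b_i. If P_n has n distinct
  real roots, Rolle's theorem passes this down to every P_i, and for
  P_2 = x^2 + 2 (n-2)!/n! a_(n-2) it forces a_(n-2) < 0.
\<close>

lemma fact_eq_fact_mult_pochhammer:
  "fact (l + k) = fact l * pochhammer (of_nat (Suc l) :: 'a::{comm_semiring_1,semiring_char_0}) k"
  unfolding pochhammer_fact using pochhammer_product[of l "k + l" "1::'a"] by (simp add: add.commute)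

lemma strict_mono_on_nth_sorted_list_of_set:
  assumes "finite A"
  shows "strict_mono_on {..<card A} (\<lambda>i. sorted_list_of_set A ! i)"
  using assms
  by (intro strict_mono_onI) (auto intro: sorted_wrt_nth_less[OF strict_sorted_list_of_set])

lemma image_nth_sorted_list_of_set:
  assumes "finite A"
  shows "(\<lambda>i. sorted_list_of_set A ! i) ` {..<card A} = A"
proof -
  have "(\<lambda>i. sorted_list_of_set A ! i) ` {..<card A} = set (map ((!) (sorted_list_of_set A)) [0..<card A])"
    by (simp add: lessThan_atLeast0)
  also have "\<dots> = A"
    using assms by (metis map_nth sorted_list_of_set.length_sorted_key_list_of_set
        sorted_list_of_set.set_sorted_key_list_of_set)
  finally show ?thesis .
qed

lemma sorted_list_of_set_image_strict_mono_on:
  assumes "strict_mono_on {..<N} f"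
  shows "sorted_list_of_set (f ` {..<N}) = map f [0..<N]"
proof (rule sorted_list_of_set_unique[THEN iffD1])
  show "sorted_wrt (<) (map f [0..<N]) \<and> set (map f [0..<N]) = f ` {..<N} \<and>
        length (map f [0..<N]) = card (f ` {..<N})"
    using assms strict_mono_on_imp_inj_on[OF assms]
    by (auto simp: sorted_wrt_iff_nth_less card_image strict_mono_onD)
qed simp

lemma prod_linear_factors_dvd:
  fixes p :: "'a::idom poly"
  assumes "finite S" "\<And>x. x \<in> S \<Longrightarrow> poly p x = 0"
  shows "(\<Prod>r\<in>S. [:-r, 1:]) dvd p"
  using assms
proof (induction S rule: finite_induct)
  case (insert a S)
  then obtain k where k: "p = (\<Prod>r\<in>S. [:-r, 1:]) * k"
    by (auto elim!: dvdE)
  have "poly (\<Prod>r\<in>S. [:-r, 1:]) a \<noteq> 0"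
    using insert.hyps by (auto simp: poly_prod)
  moreover have "poly p a = 0"
    by (simp add: insert.prems)
  ultimately have "poly k a = 0"
    using k by simp
  then obtain k' where "k = [:-a, 1:] * k'"
    by (metis dvdE poly_eq_0_iff_dvd)
  with k have "p = ([:-a, 1:] * (\<Prod>r\<in>S. [:-r, 1:])) * k'"
    by (metis mult.assoc mult.commute)
  with insert.hyps show ?case
    by (metis dvdI prod.insert)
qed simp

lemma monic_eq_prod_linear_factors:
  fixes p :: "'a::idom poly"
  assumes "lead_coeff p = 1" "card {x. poly p x = 0} = degree p"
  shows "p = (\<Prod>r | poly p r = 0. [:-r, 1:])"
proof -
  let ?Q = "\<Prod>r | poly p r = 0. [:-r, 1:]"
  have "p \<noteq> 0"
    using assms(1) by auto
  then obtain k where k: "p = ?Q * k"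
    using prod_linear_factors_dvd[OF poly_roots_finite] by (blast elim: dvdE)
  have "lead_coeff ?Q = 1"
    by (simp add: lead_coeff_prod)
  then have "?Q \<noteq> 0" "k \<noteq> 0"
    using k \<open>p \<noteq> 0\<close> by auto
  moreover have "degree ?Q = degree p"
    using assms(2) by (simp add: degree_prod_eq_sum_degree)
  ultimately have "degree k = 0"
    using k degree_mult_eq by (metis add_cancel_left_right)
  moreover have "lead_coeff k = 1"
    using k assms(1) \<open>lead_coeff ?Q = 1\<close> by (metis lead_coeff_mult mult_1)
  ultimately have "k = 1"
    using degree_0_id[of k] by (simp add: one_pCons)
  with k show ?thesis
    by simp
qed

lemma sign_poly_roots_above:
  fixes p :: "real poly"
  assumes "lead_coeff p = 1" "card {x. poly p x = 0} = degree p" "poly p w \<noteq> 0"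
  shows "(-1) ^ card {r. poly p r = 0 \<and> w < r} * poly p w > 0"
proof -
  define A where "A = {r. poly p r = 0 \<and> r < w}"
  define B where "B = {r. poly p r = 0 \<and> w < r}"
  have "p \<noteq> 0"
    using assms(1) by auto
  then have fin: "finite A" "finite B"
    unfolding A_def B_def by (auto intro: finite_subset[OF _ poly_roots_finite])
  have roots: "{r. poly p r = 0} = A \<union> B" "A \<inter> B = {}"
    using assms(3) unfolding A_def B_def by (auto, metis less_linear)+
  have "poly p w = poly (\<Prod>r | poly p r = 0. [:-r, 1:]) w"
    using monic_eq_prod_linear_factors[OF assms(1,2)] by (rule arg_cong)
  also have "\<dots> = (\<Prod>r\<in>A \<union> B. w - r)"
    by (simp add: poly_prod roots(1))
  also have "\<dots> = (\<Prod>r\<in>A. w - r) * (\<Prod>r\<in>B. - (r - w))"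
    using prod.union_disjoint[OF fin roots(2)] by simp
  also have "\<dots> = (-1) ^ card B * ((\<Prod>r\<in>A. w - r) * (\<Prod>r\<in>B. r - w))"
    by (simp only: prod_uminus mult_ac)
  finally have "(-1) ^ card B * poly p w = (\<Prod>r\<in>A. w - r) * (\<Prod>r\<in>B. r - w)"
    by simp
  also have "\<dots> > 0"
    by (intro mult_pos_pos prod_pos) (auto simp: A_def B_def)
  finally show ?thesis
    unfolding B_def .
qed

lemma pderiv_roots_between_roots:
  fixes p :: "real poly"
  assumes "p \<noteq> 0" "card {x. poly p x = 0} = m"
  shows "\<exists>z. strict_mono_on {..<m - 1} z \<and> (\<forall>j. Suc j < m \<longrightarrow>
      sorted_list_of_set {x. poly p x = 0} ! j < z j \<and>
      z j < sorted_list_of_set {x. poly p x = 0} ! Suc j \<and> poly (pderiv p) (z j) = 0)"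
proof -
  let ?r = "\<lambda>i. sorted_list_of_set {x. poly p x = 0} ! i"
  have fin: "finite {x. poly p x = 0}"
    using poly_roots_finite[OF assms(1)] .
  have r_mono: "strict_mono_on {..<m} ?r"
    using strict_mono_on_nth_sorted_list_of_set[OF fin] assms(2) by simp
  have r_root: "poly p (?r i) = 0" if "i < m" for i
    using image_nth_sorted_list_of_set[OF fin] assms(2) that by blast
  have "\<exists>z. Suc j < m \<longrightarrow> ?r j < z \<and> z < ?r (Suc j) \<and> poly (pderiv p) z = 0" for j
  proof (cases "Suc j < m")
    case True
    then have "?r j < ?r (Suc j)"
      using strict_mono_onD[OF r_mono] by simp
    then obtain z where "?r j < z" "z < ?r (Suc j)"
      "poly p (?r (Suc j)) - poly p (?r j) = (?r (Suc j) - ?r j) * poly (pderiv p) z"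
      using poly_MVT by blast
    with True r_root[of j] r_root[of "Suc j"] show ?thesis
      by auto
  qed simp
  then obtain z where z: "\<And>j. Suc j < m \<Longrightarrow>
      ?r j < z j \<and> z j < ?r (Suc j) \<and> poly (pderiv p) (z j) = 0"
    using choice[of "\<lambda>j z. Suc j < m \<longrightarrow> ?r j < z \<and> z < ?r (Suc j) \<and> poly (pderiv p) z = 0"]
    by blast
  have "strict_mono_on {..<m - 1} z"
  proof (rule strict_mono_onI)
    fix i j :: nat
    assume "i \<in> {..<m - 1}" "j \<in> {..<m - 1}" "i < j"
    then have "Suc i < m" "Suc j < m" "?r (Suc i) \<le> ?r j"
      using strict_mono_on_leD[OF r_mono] by auto
    with z[of i] z[of j] show "z i < z j"
      by linarith
  qed
  with z show ?thesis
    by blast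
qed

lemma card_roots_pderiv:
  fixes p :: "real poly"
  assumes "degree p = m" "card {x. poly p x = 0} = m" "1 \<le> m"
  shows "card {x. poly (pderiv p) x = 0} = m - 1"
proof -
  have "p \<noteq> 0" "pderiv p \<noteq> 0"
    using assms(1,3) by (auto simp: pderiv_eq_0_iff)
  obtain z where z_mono: "strict_mono_on {..<m - 1} z"
    and z: "\<forall>j. Suc j < m \<longrightarrow>
      sorted_list_of_set {x. poly p x = 0} ! j < z j \<and>
      z j < sorted_list_of_set {x. poly p x = 0} ! Suc j \<and> poly (pderiv p) (z j) = 0"
    using pderiv_roots_between_roots[OF \<open>p \<noteq> 0\<close> assms(2)] by blast
  have "z ` {..<m - 1} \<subseteq> {x. poly (pderiv p) x = 0}"
    using z by force
  then have "card (z ` {..<m - 1}) \<le> card {x. poly (pderiv p) x = 0}"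
    using card_mono[OF poly_roots_finite[OF \<open>pderiv p \<noteq> 0\<close>]] by blast
  then have "m - 1 \<le> card {x. poly (pderiv p) x = 0}"
    using card_image[OF strict_mono_on_imp_inj_on[OF z_mono]] by simp
  moreover have "card {x. poly (pderiv p) x = 0} \<le> m - 1"
    using card_poly_roots_bound[OF \<open>pderiv p \<noteq> 0\<close>] assms(1) by (simp add: degree_pderiv)
  ultimately show ?thesis
    by simp
qed

lemma alpha_pderiv_between_roots:
  fixes p :: "real poly"
  assumes "degree p = m" "card {x. poly p x = 0} = m" "Suc j < m"
  shows "sorted_list_of_set {x. poly p x = 0} ! j < alpha (pderiv p) (Suc j)"
    and "alpha (pderiv p) (Suc j) < sorted_list_of_set {x. poly p x = 0} ! Suc j"
proof -
  have "p \<noteq> 0" "pderiv p \<noteq> 0"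
    using assms(1,3) by (auto simp: pderiv_eq_0_iff)
  obtain z where z_mono: "strict_mono_on {..<m - 1} z"
    and z: "\<forall>j. Suc j < m \<longrightarrow>
      sorted_list_of_set {x. poly p x = 0} ! j < z j \<and>
      z j < sorted_list_of_set {x. poly p x = 0} ! Suc j \<and> poly (pderiv p) (z j) = 0"
    using pderiv_roots_between_roots[OF \<open>p \<noteq> 0\<close> assms(2)] by blast
  have "z ` {..<m - 1} = {x. poly (pderiv p) x = 0}"
  proof (rule card_subset_eq)
    show "finite {x. poly (pderiv p) x = 0}"
      using poly_roots_finite[OF \<open>pderiv p \<noteq> 0\<close>] .
    show "z ` {..<m - 1} \<subseteq> {x. poly (pderiv p) x = 0}"
      using z by force
    show "card (z ` {..<m - 1}) = card {x. poly (pderiv p) x = 0}"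
      using card_roots_pderiv[OF assms(1,2)] assms(3)
        card_image[OF strict_mono_on_imp_inj_on[OF z_mono]] by simp
  qed
  then have "sorted_list_of_set {x. poly (pderiv p) x = 0} = map z [0..<m - 1]"
    using sorted_list_of_set_image_strict_mono_on[OF z_mono] by simp
  then have "alpha (pderiv p) (Suc j) = z j"
    unfolding alpha_def using assms(3) by simp
  with z assms(3) show "sorted_list_of_set {x. poly p x = 0} ! j < alpha (pderiv p) (Suc j)"
    and "alpha (pderiv p) (Suc j) < sorted_list_of_set {x. poly p x = 0} ! Suc j"
    by simp_all
qed

lemma alternating_sign_at_pderiv_roots:
  fixes p :: "real poly"
  assumes "lead_coeff p = 1" "degree p = m" "card {x. poly p x = 0} = m" "1 \<le> j" "j < m"
  shows "(-1) ^ (m - j) * poly p (alpha (pderiv p) j) > 0"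
proof -
  let ?R = "{x. poly p x = 0}"
  let ?r = "\<lambda>i. sorted_list_of_set ?R ! i"
  define w where "w = alpha (pderiv p) j"
  have "p \<noteq> 0"
    using assms(1) by auto
  then have fin: "finite ?R"
    by (rule poly_roots_finite)
  have r_mono: "strict_mono_on {..<m} ?r"
    using strict_mono_on_nth_sorted_list_of_set[OF fin] assms(3) by simp
  have R_eq: "?R = ?r ` {..<m}"
    using image_nth_sorted_list_of_set[OF fin] assms(3) by simp
  have "?r (j - 1) < w" "w < ?r j"
    using alpha_pderiv_between_roots[OF assms(2,3), of "j - 1"] assms(4,5) by (simp_all add: w_def)
  have below: "?r l < w" if "l < j" for l
  proof -
    have "?r l \<le> ?r (j - 1)"
      using strict_mono_on_leD[OF r_mono, of l "j - 1"] that assms(5) by simp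
    with \<open>?r (j - 1) < w\<close> show ?thesis
      by simp
  qed
  have above: "w < ?r l" if "j \<le> l" "l < m" for l
    using strict_mono_on_leD[OF r_mono, of j l] that assms(5) \<open>w < ?r j\<close> by simp
  have "poly p w \<noteq> 0"
  proof
    assume "poly p w = 0"
    then obtain l where "l < m" "w = ?r l"
      using R_eq by blast
    with below above show False
      by (metis less_irrefl not_le)
  qed
  moreover have "{r. poly p r = 0 \<and> w < r} = ?r ` {j..<m}"
  proof (intro equalityI subsetI)
    fix r
    assume "r \<in> {r. poly p r = 0 \<and> w < r}"
    then obtain l where "l < m" "r = ?r l" "w < ?r l"
      using R_eq by auto
    with below have "j \<le> l"
      by (meson less_asym not_le)
    with \<open>l < m\<close> \<open>r = ?r l\<close> show "r \<in> ?r ` {j..<m}"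
      by auto
  next
    fix r
    assume "r \<in> ?r ` {j..<m}"
    then obtain l where "j \<le> l" "l < m" "r = ?r l"
      by auto
    with R_eq above show "r \<in> {r. poly p r = 0 \<and> w < r}"
      by auto
  qed
  moreover have "inj_on ?r {j..<m}"
    by (rule inj_on_subset[OF strict_mono_on_imp_inj_on[OF r_mono]]) auto
  then have "card (?r ` {j..<m}) = m - j"
    by (simp add: card_image)
  ultimately show ?thesis
    using sign_poly_roots_above[OF assms(1)] assms(2,3) unfolding w_def by metis
qed

lemma monic_poly_signs_at_infinity:
  fixes p :: "real poly"
  assumes "lead_coeff p = 1"
  obtains T where "\<And>x. T \<le> x \<Longrightarrow> poly p x > 0"
    and "\<And>x. T \<le> x \<Longrightarrow> (-1) ^ degree p * poly p (- x) > 0"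
proof -
  define q where "q = smult ((-1) ^ degree p) (p \<circ>\<^sub>p [:0, -1:])"
  have "lead_coeff q = 1"
    unfolding q_def using assms by (simp add: lead_coeff_comp flip: power_mult_distrib)
  then obtain T2 where T2: "\<And>x. T2 \<le> x \<Longrightarrow> poly q x \<ge> 1"
    using poly_pinfty_gt_lc[of q] by auto
  obtain T1 where T1: "\<And>x. T1 \<le> x \<Longrightarrow> poly p x \<ge> 1"
    using poly_pinfty_gt_lc[of p] assms by auto
  have "poly q x = (-1) ^ degree p * poly p (- x)" for x
    unfolding q_def by (simp add: poly_pcompose)
  with T1 T2 show thesis
    by (intro that[of "max T1 T2"]) (metis max.bounded_iff less_le_trans zero_less_one)+
qed

lemma card_roots_ge_if_sign_changes:
  fixes p :: "real poly" and \<gamma> :: "nat \<Rightarrow> real"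
  assumes "p \<noteq> 0" "strict_mono_on {..m} \<gamma>"
    and "\<And>j. j < m \<Longrightarrow> poly p (\<gamma> j) * poly p (\<gamma> (Suc j)) < 0"
  shows "m \<le> card {x. poly p x = 0}"
proof -
  have "\<exists>x. j < m \<longrightarrow> \<gamma> j < x \<and> x < \<gamma> (Suc j) \<and> poly p x = 0" for j
    using poly_IVT[OF strict_mono_onD[OF assms(2)] assms(3)] by force
  then obtain x where x: "\<forall>j. j < m \<longrightarrow> \<gamma> j < x j \<and> x j < \<gamma> (Suc j) \<and> poly p (x j) = 0"
    by metis
  have "strict_mono_on {..<m} x"
  proof (rule strict_mono_onI)
    fix i j :: nat
    assume "i \<in> {..<m}" "j \<in> {..<m}" "i < j"
    then have "i < m" "j < m" "\<gamma> (Suc i) \<le> \<gamma> j"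
      using strict_mono_on_leD[OF assms(2)] by auto
    with x show "x i < x j"
      by (meson le_less_trans less_trans)
  qed
  moreover have "x ` {..<m} \<subseteq> {x. poly p x = 0}"
    using x by auto
  ultimately have "card (x ` {..<m}) \<le> card {x. poly p x = 0}"
    using card_mono[OF poly_roots_finite[OF assms(1)]] by blast
  with card_image[OF strict_mono_on_imp_inj_on[OF \<open>strict_mono_on {..<m} x\<close>]] show ?thesis
    by simp
qed

lemma mult_neg_if_alternating_signs:
  fixes a b :: real
  assumes "(-1) ^ Suc k * a > 0" "(-1) ^ k * b > 0"
  shows "a * b < 0"
  using assms by (cases "even k") (auto simp: mult_neg_pos mult_pos_neg)

lemma card_roots_eq_degree_if_alternating:
  fixes p :: "real poly"
  assumes "lead_coeff p = 1" "degree p = m" "card {x. poly (pderiv p) x = 0} = m - 1"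
    and "\<And>j. 1 \<le> j \<Longrightarrow> j < m \<Longrightarrow> (-1) ^ (m - j) * poly p (alpha (pderiv p) j) > 0"
  shows "card {x. poly p x = 0} = m"
proof -
  let ?\<beta> = "alpha (pderiv p)"
  have "p \<noteq> 0"
    using assms(1) by auto
  have \<beta>_mono: "?\<beta> i < ?\<beta> j" if "1 \<le> i" "i < j" "j < m" for i j
  proof -
    have "pderiv p \<noteq> 0"
      using that assms(2) by (auto simp: pderiv_eq_0_iff)
    then show ?thesis
      using strict_mono_onD[OF strict_mono_on_nth_sorted_list_of_set[OF poly_roots_finite],
          of "pderiv p" "i - 1" "j - 1"] that assms(3)
      unfolding alpha_def by simp
  qed
  obtain T where T_pos: "\<And>x. T \<le> x \<Longrightarrow> poly p x > 0"
    and T_neg: "\<And>x. T \<le> x \<Longrightarrow> (-1) ^ m * poly p (- x) > 0"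
    using monic_poly_signs_at_infinity[OF assms(1)] assms(2) by metis
  define S where "S = max T 0 + (\<Sum>j<m. \<bar>?\<beta> j\<bar>) + 1"
  have "(\<Sum>j<m. \<bar>?\<beta> j\<bar>) \<ge> 0"
    by (simp add: sum_nonneg)
  then have S: "T \<le> S" "0 < S"
    unfolding S_def by linarith+
  have \<beta>_bound: "\<bar>?\<beta> j\<bar> < S" if "j < m" for j
    using member_le_sum[of j "{..<m}" "\<lambda>j. \<bar>?\<beta> j\<bar>"] that unfolding S_def by fastforce
  \<comment> \<open>Beyond \<open>\<plusminus>S\<close> the sign of \<open>p\<close> is that of its leading term.\<close>
  define \<gamma> where "\<gamma> j = (if j = 0 then - S else if j = m then S else ?\<beta> j)" for j
  have \<gamma>_sign: "(-1) ^ (m - j) * poly p (\<gamma> j) > 0" if "j \<le> m" for j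
    using T_pos[OF S(1)] T_neg[OF S(1)] assms(4)[of j] that unfolding \<gamma>_def by auto
  have "strict_mono_on {..m} \<gamma>"
  proof (rule strict_mono_onI)
    fix i j :: nat
    assume "i \<in> {..m}" "j \<in> {..m}" "i < j"
    then show "\<gamma> i < \<gamma> j"
      using \<beta>_mono[of i j] \<beta>_bound[of i] \<beta>_bound[of j] \<open>0 < S\<close>
      unfolding \<gamma>_def by (auto simp: abs_less_iff)
  qed
  moreover have "poly p (\<gamma> j) * poly p (\<gamma> (Suc j)) < 0" if "j < m" for j
  proof (rule mult_neg_if_alternating_signs)
    show "(-1) ^ Suc (m - Suc j) * poly p (\<gamma> j) > 0"
      using \<gamma>_sign[of j] that by (simp add: Suc_diff_Suc)
    show "(-1) ^ (m - Suc j) * poly p (\<gamma> (Suc j)) > 0"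
      using \<gamma>_sign[of "Suc j"] that by simp
  qed
  ultimately have "m \<le> card {x. poly p x = 0}"
    by (rule card_roots_ge_if_sign_changes[OF \<open>p \<noteq> 0\<close>])
  moreover have "card {x. poly p x = 0} \<le> m"
    using card_poly_roots_bound[OF \<open>p \<noteq> 0\<close>] assms(2) by simp
  ultimately show ?thesis
    by simp
qed

lemma card_roots_eq_degree_iff_alternating:
  fixes p :: "real poly"
  assumes "lead_coeff p = 1" "degree p = m" "card {x. poly (pderiv p) x = 0} = m - 1"
  shows "card {x. poly p x = 0} = m \<longleftrightarrow>
    (\<forall>j\<in>{1..<m}. (-1) ^ (m - j) * poly p (alpha (pderiv p) j) > 0)"
  using alternating_sign_at_pderiv_roots[OF assms(1,2)] card_roots_eq_degree_if_alternating[OF assms]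
  by auto

lemma coeff_Pder:
  "coeff (Pder n P i) l = fact i / fact n * (fact (l + (n - i)) / fact l) * coeff P (l + (n - i))"
proof -
  have "pochhammer (of_nat (Suc l)) (n - i) = (fact (l + (n - i)) / fact l :: real)"
    using fact_eq_fact_mult_pochhammer[of l "n - i", where 'a=real] by simp
  then show ?thesis
    unfolding Pder_def by (simp add: coeff_higher_pderiv)
qed

lemma degree_Pder:
  assumes "degree P = n" "i \<le> n"
  shows "degree (Pder n P i) = i"
  using assms unfolding Pder_def by (simp add: degree_higher_pderiv)

lemma lead_coeff_Pder:
  assumes "degree P = n" "lead_coeff P = 1" "i \<le> n"
  shows "lead_coeff (Pder n P i) = 1"
  using assms by (simp add: degree_Pder coeff_Pder)

lemma Pder_self [simp]: "Pder n P n = P"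
  unfolding Pder_def by simp

lemma pderiv_Pder:
  assumes "1 \<le> i" "i \<le> n"
  shows "pderiv (Pder n P i) = smult (of_nat i) (Pder n P (i - 1))"
proof -
  have "n - (i - 1) = Suc (n - i)"
    using assms by simp
  moreover have "fact i / fact n = (of_nat i :: real) * (fact (i - 1) / fact n)"
    using assms(1) by (simp add: fact_reduce)
  ultimately show ?thesis
    unfolding Pder_def by (simp add: pderiv_smult)
qed

lemma card_roots_Pder:
  assumes "degree P = n" "card {x. poly P x = 0} = n" "i \<le> n"
  shows "card {x. poly (Pder n P i) x = 0} = i"
  using assms(3)
proof (induction "n - i" arbitrary: i)
  case 0
  then show ?case
    using assms(2) by simp
next
  case (Suc k)
  then have "card {x. poly (Pder n P (Suc i)) x = 0} = Suc i"
    by simp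
  then have "card {x. poly (pderiv (Pder n P (Suc i))) x = 0} = i"
    using card_roots_pderiv[OF degree_Pder[OF assms(1)]] Suc.hyps(2) by simp
  then show ?case
    using pderiv_Pder[of "Suc i" n P] Suc.hyps(2) by simp
qed

lemma poly_Pder_eq_bcoef_minus_R0poly:
  assumes "poly (Pder n P (i - 1)) x = 0"
  shows "poly (Pder n P i) x = bcoef n P i - poly (R0poly n P i) x"
  using assms unfolding R0poly_def Rpoly_def by simp

lemma constant_coeff_neg_if_card_roots_2:
  fixes q :: "real poly"
  assumes "degree q = 2" "lead_coeff q = 1" "coeff q 1 = 0" "card {x. poly q x = 0} = 2"
  shows "coeff q 0 < 0"
proof (rule ccontr)
  assume "\<not> coeff q 0 < 0"
  have "poly q x = x\<^sup>2 + coeff q 0" for x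
    using assms(1-3) by (simp add: poly_altdef numeral_2_eq_2)
  with \<open>\<not> coeff q 0 < 0\<close> have "{x. poly q x = 0} \<subseteq> {0}"
    by (auto simp: add_nonneg_eq_0_iff)
  then have "card {x. poly q x = 0} \<le> 1"
    using card_mono[of "{0::real}"] by fastforce
  with assms(4) show False
    by simp
qed

lemma coeff_neg_if_card_roots_Pder_2:
  assumes "3 \<le> n" "degree P = n" "lead_coeff P = 1" "coeff P (n - 1) = 0"
    and "card {x. poly (Pder n P 2) x = 0} = 2"
  shows "coeff P (n - 2) < 0"
proof -
  have "coeff (Pder n P 2) 1 = 0"
    using assms(1,4) by (simp add: coeff_Pder Suc_diff_Suc numeral_2_eq_2)
  then have "coeff (Pder n P 2) 0 < 0"
    using constant_coeff_neg_if_card_roots_2 degree_Pder lead_coeff_Pder assms by simp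
  then have "(2 * fact (n - 2) / fact n) * coeff P (n - 2) < 0"
    by (simp add: coeff_Pder)
  moreover have "(2 * fact (n - 2) / fact n :: real) > 0"
    by simp
  ultimately show ?thesis
    by (meson linorder_not_le mult_nonneg_nonneg less_imp_le)
qed

lemma ball_atLeastLessThan_even_odd:
  fixes i :: nat
  assumes "2 \<le> i"
  shows "(\<forall>j\<in>{1..<i}. Q j) \<longleftrightarrow>
    (\<forall>k\<in>{1..(i - 1) div 2}. Q (2 * k)) \<and> (\<forall>k\<in>{0..(i - 2) div 2}. Q (2 * k + 1))"
proof safe
  fix j
  assume even: "\<forall>k\<in>{1..(i - 1) div 2}. Q (2 * k)"
    and odd: "\<forall>k\<in>{0..(i - 2) div 2}. Q (2 * k + 1)"
    and "j \<in> {1..<i}"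
  then show "Q j"
    using even[rule_format, of "j div 2"] odd[rule_format, of "j div 2"]
    by (cases "even j") (auto elim!: evenE oddE)
qed (use assms in auto)

lemma alternating_signs_iff_Max_Min:
  fixes F :: "nat \<Rightarrow> real"
  assumes "3 \<le> i"
  shows "(\<forall>j\<in>{1..<i}. (-1) ^ (i - j) * (b - F j) > 0) \<longleftrightarrow>
    (even i \<longrightarrow> Max ((\<lambda>k. F (2 * k)) ` {1..(i - 2) div 2}) < b \<and>
                  b < Min ((\<lambda>k. F (2 * k + 1)) ` {0..(i - 2) div 2})) \<and>
    (odd i \<longrightarrow> Max ((\<lambda>k. F (2 * k + 1)) ` {0..(i - 3) div 2}) < b \<and>
                 b < Min ((\<lambda>k. F (2 * k)) ` {1..(i - 1) div 2}))"
proof -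
  have sign: "(-1) ^ (i - j) * (b - F j) > 0 \<longleftrightarrow> (if even (i - j) then F j < b else b < F j)" for j
    by (simp add: minus_one_power_iff)
  have "2 \<le> i"
    using assms by simp
  have "(\<forall>j\<in>{1..<i}. (-1) ^ (i - j) * (b - F j) > 0) \<longleftrightarrow>
      (\<forall>k\<in>{1..(i - 1) div 2}. if even i then F (2 * k) < b else b < F (2 * k)) \<and>
      (\<forall>k\<in>{0..(i - 2) div 2}. if even i then b < F (2 * k + 1) else F (2 * k + 1) < b)"
    unfolding ball_atLeastLessThan_even_odd[OF \<open>2 \<le> i\<close>] sign
  proof (intro conj_cong ball_cong refl)
    fix k
    assume "k \<in> {1..(i - 1) div 2}"
    then have "even (i - 2 * k) \<longleftrightarrow> even i"
      by auto
    then show "(if even (i - 2 * k) then F (2 * k) < b else b < F (2 * k)) \<longleftrightarrow>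
        (if even i then F (2 * k) < b else b < F (2 * k))"
      by simp
  next
    fix k
    assume "k \<in> {0..(i - 2) div 2}"
    with \<open>2 \<le> i\<close> have "even (i - (2 * k + 1)) \<longleftrightarrow> odd i"
      by auto
    then show "(if even (i - (2 * k + 1)) then F (2 * k + 1) < b else b < F (2 * k + 1)) \<longleftrightarrow>
        (if even i then b < F (2 * k + 1) else F (2 * k + 1) < b)"
      by auto
  qed
  moreover have "1 \<le> (i - 2) div 2 \<and> (i - 1) div 2 = (i - 2) div 2" if "even i"
    using that assms by presburger
  moreover have "1 \<le> (i - 1) div 2 \<and> (i - 2) div 2 = (i - 3) div 2" if "odd i"
    using that assms by presburger
  ultimately show ?thesis
    by (cases "even i") (auto simp: Max_less_iff Min_gr_iff)
qed

lemma card_roots_Pder_iff_Max_Min: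
  assumes "degree P = n" "lead_coeff P = 1" "3 \<le> i" "i \<le> n"
    and "card {x. poly (Pder n P (i - 1)) x = 0} = i - 1"
  shows "card {x. poly (Pder n P i) x = 0} = i \<longleftrightarrow>
        (even i \<longrightarrow>
           Max ((\<lambda>k. poly (R0poly n P i) (alpha (Pder n P (i - 1)) (2 * k))) ` {1..(i - 2) div 2})
             < bcoef n P i \<and>
           bcoef n P i <
           Min ((\<lambda>k. poly (R0poly n P i) (alpha (Pder n P (i - 1)) (2 * k + 1))) ` {0..(i - 2) div 2})) \<and>
        (odd i \<longrightarrow>
           Max ((\<lambda>k. poly (R0poly n P i) (alpha (Pder n P (i - 1)) (2 * k + 1))) ` {0..(i - 3) div 2})
             < bcoef n P i \<and>
           bcoef n P i <
           Min ((\<lambda>k. poly (R0poly n P i) (alpha (Pder n P (i - 1)) (2 * k))) ` {1..(i - 1) div 2}))"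
    (is "_ \<longleftrightarrow> ?interlacing")
proof -
  let ?q = "Pder n P (i - 1)"
  have "{x. poly (pderiv (Pder n P i)) x = 0} = {x. poly ?q x = 0}"
    using pderiv_Pder[of i n P] assms(3,4) by simp
  then have "card {x. poly (Pder n P i) x = 0} = i \<longleftrightarrow>
      (\<forall>j\<in>{1..<i}. (-1) ^ (i - j) * poly (Pder n P i) (alpha ?q j) > 0)"
    using card_roots_eq_degree_iff_alternating[OF lead_coeff_Pder degree_Pder] assms
    unfolding alpha_def by simp
  also have "\<dots> \<longleftrightarrow> (\<forall>j\<in>{1..<i}.
      (-1) ^ (i - j) * (bcoef n P i - poly (R0poly n P i) (alpha ?q j)) > 0)"
  proof (intro ball_cong refl)
    fix j
    assume "j \<in> {1..<i}"
    moreover have "i - 1 \<le> n"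
      using assms(4) by simp
    then have "?q \<noteq> 0"
      using lead_coeff_Pder[OF assms(1,2)] by fastforce
    ultimately have "poly ?q (alpha ?q j) = 0"
      using image_nth_sorted_list_of_set[OF poly_roots_finite[OF \<open>?q \<noteq> 0\<close>]] assms(5)
      unfolding alpha_def by force
    then show "(-1) ^ (i - j) * poly (Pder n P i) (alpha ?q j) > 0 \<longleftrightarrow>
        (-1) ^ (i - j) * (bcoef n P i - poly (R0poly n P i) (alpha ?q j)) > 0"
      by (simp add: poly_Pder_eq_bcoef_minus_R0poly)
  qed
  also have "\<dots> \<longleftrightarrow> ?interlacing"
    by (rule alternating_signs_iff_Max_Min[OF assms(3)])
  finally show ?thesis .
qed

theorem theorem2:
  fixes P :: "real poly" and n :: nat
  assumes "n \<ge> 3" and "degree P = n" and "lead_coeff P = 1"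
    and "coeff P (n - 1) = 0"
  shows "card {x::real. poly P x = 0} = n \<longleftrightarrow>
    (coeff P (n - 2) < 0 \<and>
     (\<forall>i\<in>{3..n}.
        card {x::real. poly (Pder n P (i - 1)) x = 0} = i - 1 \<and>
        (even i \<longrightarrow>
           Max ((\<lambda>k. poly (R0poly n P i) (alpha (Pder n P (i - 1)) (2 * k))) ` {1..(i - 2) div 2})
             < bcoef n P i \<and>
           bcoef n P i <
           Min ((\<lambda>k. poly (R0poly n P i) (alpha (Pder n P (i - 1)) (2 * k + 1))) ` {0..(i - 2) div 2})) \<and>
        (odd i \<longrightarrow>
           Max ((\<lambda>k. poly (R0poly n P i) (alpha (Pder n P (i - 1)) (2 * k + 1))) ` {0..(i - 3) div 2})
             < bcoef n P i \<and>
           bcoef n P i <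
           Min ((\<lambda>k. poly (R0poly n P i) (alpha (Pder n P (i - 1)) (2 * k))) ` {1..(i - 1) div 2}))))"
    (is "_ \<longleftrightarrow> _ \<and> (\<forall>i\<in>{3..n}. ?card_pred i \<and> ?interlacing i)")
proof
  assume "card {x. poly P x = 0} = n"
  then have card_Pder: "card {x. poly (Pder n P i) x = 0} = i" if "i \<le> n" for i
    using that by (rule card_roots_Pder[OF assms(2)])
  have "coeff P (n - 2) < 0"
    using coeff_neg_if_card_roots_Pder_2[OF assms] card_Pder[of 2] assms(1) by simp
  moreover have "?card_pred i \<and> ?interlacing i" if "i \<in> {3..n}" for i
  proof
    have i: "3 \<le> i" "i \<le> n"
      using that by auto
    then show "?card_pred i"
      using card_Pder[of "i - 1"] by simp
    then show "?interlacing i"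
      using card_roots_Pder_iff_Max_Min[OF assms(2,3) i] card_Pder[OF i(2)] by simp
  qed
  ultimately show "coeff P (n - 2) < 0 \<and> (\<forall>i\<in>{3..n}. ?card_pred i \<and> ?interlacing i)"
    by blast
next
  assume "coeff P (n - 2) < 0 \<and> (\<forall>i\<in>{3..n}. ?card_pred i \<and> ?interlacing i)"
  moreover have "n \<in> {3..n}"
    using assms(1) by simp
  ultimately have "?card_pred n \<and> ?interlacing n"
    by (blast dest: conjunct2)
  then have "card {x. poly (Pder n P n) x = 0} = n"
    using card_roots_Pder_iff_Max_Min[OF assms(2,3,1) order_refl] by (blast dest: conjunct1)
  then show "card {x. poly P x = 0} = n"
    by simp
qed
end
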